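(* For every $m\ge1$, $0\le s\le m$ and every $j\in\{1,\dots,m\}$, the function $e^{(m-1)\lambda_j}\,\tilde G_s(m,\{\lambda_l\}|\{\xi_k\})$, viewed as a function of $\lambda_j$ with all other variables fixed (generic), is a polynomial in $e^{2\lambda_j}$ of degree at most $m-1$.
   Context: Fix $\zeta\in(0,\pi)$. For integers $m\ge1$, $0\le s\le m$, set $\epsilon_j=-\tfrac12$ for $j\le s$ and $\epsilon_j=+\tfrac12$ for $j>s$ ($\epsilon_j$ attached to $\lambda_j$). Define $$G_s(m,\{\lambda_j\}|\{\xi_k\})=\frac{1}{s!(m-s)!}\sum_{\sigma\in S_m}(-1)^{[\sigma]}\prod_{1\le k<j\le m}\frac{\sinh(\lambda_{\sigma(j)}-\xi_k+i\epsilon_{\sigma(j)}\zeta)\,\sinh(\lambda_{\sigma(k)}-\xi_j-i\epsilon_{\sigma(k)}\zeta)}{\sinh(\lambda_{\sigma(j)}-\lambda_{\sigma(k)}+i(\epsilon_{\sigma(j)}+\epsilon_{\sigma(k)})\zeta)}$$ ($(-1)^{[\sigma]}$ the sign of $\sigma$), and define $\tilde G_s$ by $$G_s(m,\{\lambda_j\}|\{\xi_k\})=\frac{1}{s!(m-s)!}\prod_{1\le k<j\le m}\frac{\sinh(\lambda_j-\lambda_k)}{\sinh(\lambda_j-\lambda_k+i(\epsilon_j+\epsilon_k)\zeta)\,\sinh(\lambda_j-\lambda_k-i(\epsilon_j+\epsilon_k)\zeta)}\;\tilde G_s(m,\{\lambda_j\}|\{\xi_k\}),$$ understood as an identity of meromorphic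 functions (removable singularities extended by continuity). *)

theory Defs
  imports "HOL-Analysis.Analysis" "HOL-Combinatorics.Permutations"
begin

definition eps :: "nat \<Rightarrow> nat \<Rightarrow> real" where
  "eps s j = (if j \<le> s then -1/2 else 1/2)"

definition G :: "real \<Rightarrow> nat \<Rightarrow> nat \<Rightarrow> (nat \<Rightarrow> complex) \<Rightarrow> (nat \<Rightarrow> complex) \<Rightarrow> complex" where
  "G \<zeta> s m lam xi =
     (1 / (fact s * fact (m - s))) *
     (\<Sum>\<sigma> | \<sigma> permutes {1..m}. of_int (sign \<sigma>) *
        (\<Prod>j\<in>{1..m}. \<Prod>k\<in>{1..<j}.
           sinh (lam (\<sigma> j) - xi k + \<i> * of_real (eps s (\<sigma> j) * \<zeta>)) *
           sinh (lam (\<sigma> k) - xi j - \<i> * of_real (eps s (\<sigma> k) * \<zeta>)) /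
           sinh (lam (\<sigma> j) - lam (\<sigma> k) + \<i> * of_real ((eps s (\<sigma> j) + eps s (\<sigma> k)) * \<zeta>))))"

text \<open>Points where all denominators involved (in G and in the prefactor) are nonzero;
  there the pointwise formula agrees with the meromorphic function.\<close>
definition regular_point :: "real \<Rightarrow> nat \<Rightarrow> nat \<Rightarrow> (nat \<Rightarrow> complex) \<Rightarrow> bool" where
  "regular_point \<zeta> s m lam \<longleftrightarrow>
     (\<forall>j k. 1 \<le> k \<and> k < j \<and> j \<le> m \<longrightarrow>
        sinh (lam j - lam k) \<noteq> 0 \<and>
        sinh (lam j - lam k + \<i> * of_real ((eps s j + eps s k) * \<zeta>)) \<noteq> 0 \<and>
        sinh (lam j - lam k - \<i> * of_real ((eps s j + eps s k) * \<zeta>)) \<noteq> 0)"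

text \<open>G-tilde, obtained by solving the defining identity for it.\<close>
definition Gt :: "real \<Rightarrow> nat \<Rightarrow> nat \<Rightarrow> (nat \<Rightarrow> complex) \<Rightarrow> (nat \<Rightarrow> complex) \<Rightarrow> complex" where
  "Gt \<zeta> s m lam xi =
     G \<zeta> s m lam xi * (fact s * fact (m - s)) *
     (\<Prod>j\<in>{1..m}. \<Prod>k\<in>{1..<j}.
        sinh (lam j - lam k + \<i> * of_real ((eps s j + eps s k) * \<zeta>)) *
        sinh (lam j - lam k - \<i> * of_real ((eps s j + eps s k) * \<zeta>)) /
        sinh (lam j - lam k))"

end

theory Submission
  imports Defs "HOL-Computational_Algebra.Polynomial"
begin

(* Multiplying Gt by the hyperbolic Vandermonde V = prod_{k<j} sinh (lambda_j - lambda_k) clears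
   all denominators: the factor prod_{k<j} sinh (lambda_j - lambda_k + i (eps_j + eps_k) zeta) *
   sinh (lambda_j - lambda_k - i (eps_j + eps_k) zeta) is symmetric in the pair, hence the same
   for every permutation sigma, and it cancels the denominators of the sigma-term of G.  In each
   term of the resulting numerator H, lambda_j occurs in 2 (m - 1) sinh factors, so
   exp (2 (m - 1) lambda_j) H is a polynomial of degree <= 2 (m - 1) in exp (2 lambda_j).
   H vanishes at lambda_j = lambda_b for each b /= j, so it is divisible by
   prod_{b /= j} sinh (lambda_j - lambda_b), which is V up to a factor independent of lambda_j;
   the quotient, Gt up to that factor, has degree m - 1. *)

(* f z = (SUM k <= n. c k * exp ((2 * k - n) * z)), e.g. a product of n factors sinh (+-z + c). *)
definition hyperbolic_poly :: "nat \<Rightarrow> (complex \<Rightarrow> complex) \<Rightarrow> bool" where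
  "hyperbolic_poly n f \<longleftrightarrow>
     (\<exists>p. degree p \<le> n \<and> (\<forall>z. exp (of_nat n * z) * f z = poly p (exp (2 * z))))"

lemma hyperbolic_poly_const: "hyperbolic_poly 0 (\<lambda>z. c)"
  unfolding hyperbolic_poly_def by (intro exI[of _ "[:c:]"]) simp

lemma sinh_diff_times_exp:
  fixes z c :: complex
  shows "2 * exp c * exp z * sinh (z - c) = exp (2 * z) - exp (2 * c)"
proof -
  have "2 * exp c * exp z * sinh (z - c) = exp c * exp z * exp (z - c) - exp c * exp z * exp (c - z)"
    by (simp add: sinh_field_def right_diff_distrib)
  also have "\<dots> = exp (2 * z) - exp (2 * c)"
    by (simp flip: exp_add add: algebra_simps)
  finally show ?thesis .
qed

lemma hyperbolic_poly_sinh: "hyperbolic_poly 1 (\<lambda>z. sinh (z + c))"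
proof -
  define p where "p = smult (exp c / 2) [:- exp (- 2 * c), 1:]"
  have "exp z * sinh (z + c) = poly p (exp (2 * z))" for z
    using sinh_diff_times_exp[of "- c" z] by (simp add: p_def exp_minus field_simps)
  moreover have "degree p \<le> 1"
    by (simp add: p_def)
  ultimately show ?thesis
    unfolding hyperbolic_poly_def by auto
qed

lemma hyperbolic_poly_mult:
  assumes "hyperbolic_poly n f" "hyperbolic_poly k g"
  shows "hyperbolic_poly (n + k) (\<lambda>z. f z * g z)"
proof -
  obtain p q where p: "degree p \<le> n" "\<And>z. exp (of_nat n * z) * f z = poly p (exp (2 * z))"
    and q: "degree q \<le> k" "\<And>z. exp (of_nat k * z) * g z = poly q (exp (2 * z))"
    using assms unfolding hyperbolic_poly_def by blast
  have "exp (of_nat (n + k) * z) * (f z * g z) = poly (p * q) (exp (2 * z))" for z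
    by (simp flip: p(2) q(2) add: distrib_right exp_add)
  moreover have "degree (p * q) \<le> n + k"
    using p(1) q(1) degree_mult_le[of p q] by linarith
  ultimately show ?thesis
    unfolding hyperbolic_poly_def by blast
qed

lemma hyperbolic_poly_add:
  assumes "hyperbolic_poly n f" "hyperbolic_poly n g"
  shows "hyperbolic_poly n (\<lambda>z. f z + g z)"
proof -
  obtain p q where p: "degree p \<le> n" "\<And>z. exp (of_nat n * z) * f z = poly p (exp (2 * z))"
    and q: "degree q \<le> n" "\<And>z. exp (of_nat n * z) * g z = poly q (exp (2 * z))"
    using assms unfolding hyperbolic_poly_def by blast
  have "exp (of_nat n * z) * (f z + g z) = poly (p + q) (exp (2 * z))" for z
    by (simp flip: p(2) q(2) add: distrib_left)
  then show ?thesis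
    unfolding hyperbolic_poly_def using p(1) q(1) degree_add_le by blast
qed

lemma hyperbolic_poly_cmult: "hyperbolic_poly n f \<Longrightarrow> hyperbolic_poly n (\<lambda>z. c * f z)"
  using hyperbolic_poly_mult[OF hyperbolic_poly_const] by simp

lemma hyperbolic_poly_sum:
  "finite A \<Longrightarrow> (\<And>i. i \<in> A \<Longrightarrow> hyperbolic_poly n (f i)) \<Longrightarrow>
    hyperbolic_poly n (\<lambda>z. \<Sum>i\<in>A. f i z)"
proof (induction A rule: finite_induct)
  case empty
  then show ?case
    unfolding hyperbolic_poly_def by (intro exI[of _ 0]) simp
next
  case (insert x F)
  then show ?case
    by (simp add: hyperbolic_poly_add)
qed

lemma hyperbolic_poly_prod:
  "finite A \<Longrightarrow> (\<And>i. i \<in> A \<Longrightarrow> hyperbolic_poly (n i) (f i)) \<Longrightarrow>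
    hyperbolic_poly (\<Sum>i\<in>A. n i) (\<lambda>z. \<Prod>i\<in>A. f i z)"
proof (induction A rule: finite_induct)
  case empty
  then show ?case
    using hyperbolic_poly_const[of 1] by simp
next
  case (insert x F)
  then show ?case
    by (simp add: hyperbolic_poly_mult)
qed

lemma hyperbolic_poly_sinh_update:
  "hyperbolic_poly (of_bool (b = a)) (\<lambda>z. sinh ((lam(a := z)) b + c))"
  using hyperbolic_poly_sinh[of c] hyperbolic_poly_const[of "sinh (lam b + c)"] by auto

lemma hyperbolic_poly_sinh_update_diff:
  assumes "b \<noteq> d"
  shows "hyperbolic_poly (of_bool (b = a) + of_bool (d = a))
           (\<lambda>z. sinh ((lam(a := z)) b - (lam(a := z)) d + c))"
proof -
  have "hyperbolic_poly 1 (\<lambda>z. sinh (lam b - z + c))"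
    using hyperbolic_poly_cmult[OF hyperbolic_poly_sinh[of "- c - lam b"], of "- 1"]
    by (simp flip: sinh_minus add: algebra_simps)
  then show ?thesis
    using assms hyperbolic_poly_sinh[of "c - lam d"]
      hyperbolic_poly_const[of "sinh (lam b - lam d + c)"]
    by (cases "b = a"; cases "d = a") (auto simp: algebra_simps)
qed

lemma hyperbolic_poly_factor_root:
  assumes h: "hyperbolic_poly (Suc n) h" and root: "h c = 0"
  obtains g where "hyperbolic_poly n g" "\<And>z. h z = sinh (z - c) * g z"
proof -
  obtain p where p: "degree p \<le> Suc n" "\<And>z. exp (of_nat (Suc n) * z) * h z = poly p (exp (2 * z))"
    using h unfolding hyperbolic_poly_def by blast
  have "poly p (exp (2 * c)) = 0"
    using p(2)[of c] root by simp
  then have "[:- exp (2 * c), 1:] dvd p"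
    by (simp add: poly_eq_0_iff_dvd)
  then obtain q where q: "p = [:- exp (2 * c), 1:] * q"
    by (elim dvdE)
  have "degree q \<le> n"
  proof (cases "q = 0")
    case False
    then have "degree p = Suc (degree q)"
      unfolding q by (subst degree_mult_eq) auto
    with p(1) show ?thesis by simp
  qed simp
  then have g: "hyperbolic_poly n (\<lambda>z. 2 * exp c * poly q (exp (2 * z)) / exp (of_nat n * z))"
    unfolding hyperbolic_poly_def by (intro exI[of _ "smult (2 * exp c) q"]) simp
  have "h z = sinh (z - c) * (2 * exp c * poly q (exp (2 * z)) / exp (of_nat n * z))" for z
  proof -
    have "exp z * (exp (of_nat n * z) * h z) = exp (of_nat (Suc n) * z) * h z"
      by (simp add: distrib_right exp_add)
    also have "\<dots> = (exp (2 * z) - exp (2 * c)) * poly q (exp (2 * z))"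
      using p(2)[of z] unfolding q by (simp add: left_diff_distrib)
    also have "\<dots> = exp z * (exp (of_nat n * z) *
        (sinh (z - c) * (2 * exp c * poly q (exp (2 * z)) / exp (of_nat n * z))))"
      by (simp flip: sinh_diff_times_exp)
    finally show ?thesis
      by (simp add: eq_divide_eq ac_simps)
  qed
  with g that show ?thesis by blast
qed

lemma hyperbolic_poly_factor_roots:
  assumes "finite B" "hyperbolic_poly (n + card B) h" "\<And>b. b \<in> B \<Longrightarrow> h (w b) = 0"
    and "pairwise (\<lambda>b d. sinh (w b - w d) \<noteq> 0) B"
  shows "\<exists>g. hyperbolic_poly n g \<and> (\<forall>z. h z = (\<Prod>b\<in>B. sinh (z - w b)) * g z)"
  using assms
proof (induction B arbitrary: h rule: finite_induct)
  case empty
  then show ?case by auto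
next
  case (insert x F)
  have h: "hyperbolic_poly (Suc (n + card F)) h"
    using insert.prems(1) insert.hyps by simp
  obtain h1 where h1: "hyperbolic_poly (n + card F) h1" "\<And>z. h z = sinh (z - w x) * h1 z"
    using hyperbolic_poly_factor_root[OF h insert.prems(2)[OF insertI1]] by blast
  have pairwise_F: "pairwise (\<lambda>b d. sinh (w b - w d) \<noteq> 0) F"
    using insert.prems(3) by (simp add: pairwise_insert)
  have "h1 (w b) = 0" if b: "b \<in> F" for b
  proof -
    have "sinh (w b - w x) \<noteq> 0"
      using insert.prems(3) insert.hyps(2) b by (force simp: pairwise_insert)
    moreover have "h (w b) = 0"
      using insert.prems(2) b by simp
    ultimately show ?thesis
      using h1(2)[of "w b"] by simp
  qed
  then obtain g where g: "hyperbolic_poly n g" "\<forall>z. h1 z = (\<Prod>b\<in>F. sinh (z - w b)) * g z"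
    using insert.IH[OF h1(1) _ pairwise_F] by blast
  have "h z = (\<Prod>b\<in>insert x F. sinh (z - w b)) * g z" for z
    using g(2) h1(2)[of z] insert.hyps by (simp add: mult.assoc)
  with g(1) show ?case by blast
qed

lemma hyperbolic_poly_coeffs:
  assumes "hyperbolic_poly n f"
  obtains c where "\<And>z. exp (of_nat n * z) * f z = (\<Sum>k<Suc n. c k * exp (2 * z) ^ k)"
proof -
  obtain p where p: "degree p \<le> n" "\<And>z. exp (of_nat n * z) * f z = poly p (exp (2 * z))"
    using assms unfolding hyperbolic_poly_def by blast
  have "poly p x = (\<Sum>k<Suc n. coeff p k * x ^ k)" for x
    unfolding poly_altdef using p(1)
    by (intro sum.mono_neutral_left) (auto simp: coeff_eq_0)
  then show ?thesis
    using that[of "coeff p"] p(2) by simp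
qed

lemma prod_pairs_remove:
  fixes f :: "nat \<Rightarrow> nat \<Rightarrow> 'a::comm_monoid_mult"
  assumes a: "a \<in> {1..m}"
  shows "(\<Prod>j\<in>{1..m}. \<Prod>k\<in>{1..<j}. f j k) =
    (\<Prod>j\<in>{1..m}-{a}. \<Prod>k\<in>{1..<j}-{a}. f j k) * (\<Prod>b\<in>{1..m}-{a}. if b < a then f a b else f b a)"
proof -
  have row: "(\<Prod>k\<in>{1..<j}. f j k) = (\<Prod>k\<in>{1..<j}-{a}. f j k) * (if j < a then 1 else f j a)"
    if "j \<in> {1..m}-{a}" for j
  proof (cases "a < j")
    case True
    then show ?thesis
      using a that by (simp add: prod.remove mult.commute)
  next
    case False
    then show ?thesis
      using that by (simp add: not_less)
  qed
  have merge: "(\<Prod>b\<in>S. if b < a then f a b else 1) * (\<Prod>b\<in>S. if b < a then 1 else f b a) =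
      (\<Prod>b\<in>S. if b < a then f a b else f b a)" for S
    unfolding prod.distrib[symmetric] by (intro prod.cong) auto
  have "(\<Prod>j\<in>{1..m}. \<Prod>k\<in>{1..<j}. f j k) =
      (\<Prod>k\<in>{1..<a}. f a k) * (\<Prod>j\<in>{1..m}-{a}. \<Prod>k\<in>{1..<j}. f j k)"
    using a by (simp add: prod.remove)
  also have "(\<Prod>k\<in>{1..<a}. f a k) = (\<Prod>b\<in>{1..m}-{a}. if b < a then f a b else 1)"
    using a by (intro prod.mono_neutral_cong_left) auto
  also have "(\<Prod>j\<in>{1..m}-{a}. \<Prod>k\<in>{1..<j}. f j k) =
      (\<Prod>j\<in>{1..m}-{a}. \<Prod>k\<in>{1..<j}-{a}. f j k) * (\<Prod>b\<in>{1..m}-{a}. if b < a then 1 else f b a)"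
    using row by (simp add: prod.distrib)
  finally show ?thesis
    by (simp add: merge[symmetric] ac_simps)
qed

lemma prod_pairs_permute:
  fixes g :: "nat \<Rightarrow> nat \<Rightarrow> 'a::comm_monoid_mult"
  assumes \<sigma>: "\<sigma> permutes {1..m}" and sym: "\<And>c d. g c d = g d c"
  shows "(\<Prod>j\<in>{1..m}. \<Prod>k\<in>{1..<j}. g (\<sigma> j) (\<sigma> k)) = (\<Prod>j\<in>{1..m}. \<Prod>k\<in>{1..<j}. g j k)"
proof -
  let ?P = "Sigma {1..m} (\<lambda>j. {1..<j})"
  define h where "h = (\<lambda>(j, k). (max (\<sigma> j) (\<sigma> k), min (\<sigma> j) (\<sigma> k)))"
  define h' where "h' = (\<lambda>(j, k). (max (inv \<sigma> j) (inv \<sigma> k), min (inv \<sigma> j) (inv \<sigma> k)))"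
  have inv1: "inv \<sigma> (\<sigma> x) = x" and inv2: "\<sigma> (inv \<sigma> x) = x" for x
    using permutes_inverses[OF \<sigma>] by auto
  have im1: "\<sigma> x \<in> {1..m} \<longleftrightarrow> x \<in> {1..m}" and im2: "inv \<sigma> x \<in> {1..m} \<longleftrightarrow> x \<in> {1..m}" for x
    using permutes_in_image[OF \<sigma>] permutes_in_image[OF permutes_inv[OF \<sigma>]] by auto
  have inj1: "\<sigma> x = \<sigma> y \<longleftrightarrow> x = y" and inj2: "inv \<sigma> x = inv \<sigma> y \<longleftrightarrow> x = y" for x y
    by (metis inv1, metis inv2)
  have "bij_betw h ?P ?P"
  proof (rule bij_betw_byWitness[where f' = h'])
    show "\<forall>x\<in>?P. h' (h x) = x" "\<forall>x\<in>?P. h (h' x) = x"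
      by (auto simp: h_def h'_def inv1 inv2 max_def min_def)
    show "h ` ?P \<subseteq> ?P" "h' ` ?P \<subseteq> ?P"
      using im1 inj1 im2 inj2 by (fastforce simp: h_def h'_def max_def min_def)+
  qed
  then have "(\<Prod>x\<in>?P. g (fst x) (snd x)) = (\<Prod>x\<in>?P. g (fst (h x)) (snd (h x)))"
    using prod.reindex_bij_betw[of h ?P ?P "\<lambda>x. g (fst x) (snd x)"] by simp
  also have "\<dots> = (\<Prod>x\<in>?P. g (\<sigma> (fst x)) (\<sigma> (snd x)))"
    by (intro prod.cong) (auto simp: h_def max_def min_def sym)
  finally show ?thesis
    by (simp add: prod.Sigma split_def)
qed

lemma regular_point_sinh_nonzero:
  assumes reg: "regular_point \<zeta> s m L" and "b \<in> {1..m}" "d \<in> {1..m}" "b \<noteq> d"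
  shows "sinh (L b - L d) \<noteq> 0"
    and "sinh (L b - L d + \<i> * of_real ((eps s b + eps s d) * \<zeta>)) \<noteq> 0"
proof -
  have "sinh (L b - L d) \<noteq> 0 \<and> sinh (L b - L d + \<i> * of_real ((eps s b + eps s d) * \<zeta>)) \<noteq> 0"
  proof (cases "d < b")
    case True
    then show ?thesis
      using reg assms(2,3) unfolding regular_point_def by auto
  next
    case False
    then have "b < d"
      using assms(4) by simp
    then have "sinh (L d - L b) \<noteq> 0" "sinh (L d - L b - \<i> * of_real ((eps s d + eps s b) * \<zeta>)) \<noteq> 0"
      using reg assms(2,3) unfolding regular_point_def by auto
    moreover have "L d - L b = - (L b - L d)"
      "L d - L b - \<i> * of_real ((eps s d + eps s b) * \<zeta>) =
        - (L b - L d + \<i> * of_real ((eps s b + eps s d) * \<zeta>))"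
      by (simp_all add: algebra_simps)
    ultimately show ?thesis
      by (metis sinh_minus neg_equal_0_iff_equal)
  qed
  then show "sinh (L b - L d) \<noteq> 0"
    and "sinh (L b - L d + \<i> * of_real ((eps s b + eps s d) * \<zeta>)) \<noteq> 0"
    by auto
qed

definition sinh_vandermonde :: "nat \<Rightarrow> (nat \<Rightarrow> complex) \<Rightarrow> complex" where
  "sinh_vandermonde m L = (\<Prod>j\<in>{1..m}. \<Prod>k\<in>{1..<j}. sinh (L j - L k))"

definition G_numerator_factor :: "real \<Rightarrow> nat \<Rightarrow> (nat \<Rightarrow> complex) \<Rightarrow> (nat \<Rightarrow> complex) \<Rightarrow>
    nat \<Rightarrow> nat \<Rightarrow> nat \<Rightarrow> nat \<Rightarrow> complex" where
  "G_numerator_factor \<zeta> s L xi b d j k =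
     sinh (L b - xi k + \<i> * of_real (eps s b * \<zeta>)) *
     sinh (L d - xi j - \<i> * of_real (eps s d * \<zeta>)) *
     sinh (L b - L d - \<i> * of_real ((eps s b + eps s d) * \<zeta>))"

definition G_numerator ::
    "real \<Rightarrow> nat \<Rightarrow> nat \<Rightarrow> (nat \<Rightarrow> complex) \<Rightarrow> (nat \<Rightarrow> complex) \<Rightarrow> complex" where
  "G_numerator \<zeta> s m L xi = (\<Sum>\<sigma> | \<sigma> permutes {1..m}. of_int (sign \<sigma>) *
      (\<Prod>j\<in>{1..m}. \<Prod>k\<in>{1..<j}. G_numerator_factor \<zeta> s L xi (\<sigma> j) (\<sigma> k) j k))"

lemma Gt_times_sinh_vandermonde:
  assumes reg: "regular_point \<zeta> s m L"
  shows "Gt \<zeta> s m L xi * sinh_vandermonde m L = G_numerator \<zeta> s m L xi"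
proof -
  define E where "E c d = \<i> * of_real ((eps s c + eps s d) * \<zeta>)" for c d
  define g where "g c d = sinh (L c - L d + E c d) * sinh (L c - L d - E c d)" for c d
  define num where "num \<sigma> j k = sinh (L (\<sigma> j) - xi k + \<i> * of_real (eps s (\<sigma> j) * \<zeta>)) *
    sinh (L (\<sigma> k) - xi j - \<i> * of_real (eps s (\<sigma> k) * \<zeta>))" for \<sigma> :: "nat \<Rightarrow> nat" and j k
  have g_sym: "g c d = g d c" for c d
  proof -
    have swap: "L d - L c + E d c = - (L c - L d - E c d)" "L d - L c - E d c = - (L c - L d + E c d)"
      by (simp_all add: E_def algebra_simps)
    have "g d c = sinh (- (L c - L d - E c d)) * sinh (- (L c - L d + E c d))"
      unfolding g_def swap ..
    also have "\<dots> = g c d"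
      unfolding g_def sinh_minus by (simp add: mult.commute)
    finally show ?thesis ..
  qed
  have "Gt \<zeta> s m L xi * sinh_vandermonde m L =
      G \<zeta> s m L xi * (fact s * fact (m - s)) *
      (\<Prod>j\<in>{1..m}. \<Prod>k\<in>{1..<j}. g j k / sinh (L j - L k) * sinh (L j - L k))"
    unfolding Gt_def sinh_vandermonde_def g_def E_def by (simp only: prod.distrib mult.assoc)
  also have "\<dots> = G \<zeta> s m L xi * (fact s * fact (m - s)) * (\<Prod>j\<in>{1..m}. \<Prod>k\<in>{1..<j}. g j k)"
    using regular_point_sinh_nonzero(1)[OF reg] by (intro arg_cong2[where f = "(*)"] prod.cong) auto
  also have "G \<zeta> s m L xi * (fact s * fact (m - s)) = (\<Sum>\<sigma> | \<sigma> permutes {1..m}.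
      of_int (sign \<sigma>) * (\<Prod>j\<in>{1..m}. \<Prod>k\<in>{1..<j}. num \<sigma> j k / sinh (L (\<sigma> j) - L (\<sigma> k) + E (\<sigma> j) (\<sigma> k))))"
    unfolding G_def num_def E_def by simp
  also have "\<dots> * (\<Prod>j\<in>{1..m}. \<Prod>k\<in>{1..<j}. g j k) = G_numerator \<zeta> s m L xi"
    unfolding G_numerator_def sum_distrib_right
  proof (intro sum.cong refl)
    fix \<sigma> assume "\<sigma> \<in> {\<sigma>. \<sigma> permutes {1..m}}"
    then have \<sigma>: "\<sigma> permutes {1..m}" by simp
    have "num \<sigma> j k / sinh (L (\<sigma> j) - L (\<sigma> k) + E (\<sigma> j) (\<sigma> k)) * g (\<sigma> j) (\<sigma> k) =
        G_numerator_factor \<zeta> s L xi (\<sigma> j) (\<sigma> k) j k" if "j \<in> {1..m}" "k \<in> {1..<j}" for j k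
    proof -
      have "\<sigma> j \<in> {1..m}" "\<sigma> k \<in> {1..m}" "\<sigma> j \<noteq> \<sigma> k"
        using that permutes_in_image[OF \<sigma>] permutes_inj[OF \<sigma>] by (auto dest: injD)
      then have "sinh (L (\<sigma> j) - L (\<sigma> k) + E (\<sigma> j) (\<sigma> k)) \<noteq> 0"
        unfolding E_def by (rule regular_point_sinh_nonzero(2)[OF reg])
      then show ?thesis
        unfolding num_def g_def G_numerator_factor_def E_def by simp
    qed
    then show "of_int (sign \<sigma>) * (\<Prod>j\<in>{1..m}. \<Prod>k\<in>{1..<j}.
          num \<sigma> j k / sinh (L (\<sigma> j) - L (\<sigma> k) + E (\<sigma> j) (\<sigma> k))) * (\<Prod>j\<in>{1..m}. \<Prod>k\<in>{1..<j}. g j k) =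
        of_int (sign \<sigma>) * (\<Prod>j\<in>{1..m}. \<Prod>k\<in>{1..<j}. G_numerator_factor \<zeta> s L xi (\<sigma> j) (\<sigma> k) j k)"
      unfolding prod_pairs_permute[OF \<sigma>, of g, OF g_sym, symmetric] mult.assoc prod.distrib[symmetric]
      by (intro arg_cong2[where f = "(*)"] prod.cong) auto
  qed
  finally show ?thesis .
qed

lemma hyperbolic_poly_G_numerator_factor:
  assumes "b \<noteq> d"
  shows "hyperbolic_poly (2 * (of_bool (b = a) + of_bool (d = a)))
           (\<lambda>z. G_numerator_factor \<zeta> s (lam(a := z)) xi b d j k)"
proof -
  have "hyperbolic_poly (of_bool (b = a))
      (\<lambda>z. sinh ((lam(a := z)) b - xi k + \<i> * of_real (eps s b * \<zeta>)))"
    using hyperbolic_poly_sinh_update[of b a lam "\<i> * of_real (eps s b * \<zeta>) - xi k"]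
    by (simp add: add_diff_eq diff_add_eq)
  moreover have "hyperbolic_poly (of_bool (d = a))
      (\<lambda>z. sinh ((lam(a := z)) d - xi j - \<i> * of_real (eps s d * \<zeta>)))"
    using hyperbolic_poly_sinh_update[of d a lam "- xi j - \<i> * of_real (eps s d * \<zeta>)"]
    by (simp add: algebra_simps)
  moreover have "hyperbolic_poly (of_bool (b = a) + of_bool (d = a))
      (\<lambda>z. sinh ((lam(a := z)) b - (lam(a := z)) d - \<i> * of_real ((eps s b + eps s d) * \<zeta>)))"
    using hyperbolic_poly_sinh_update_diff[OF assms, of a lam "- \<i> * of_real ((eps s b + eps s d) * \<zeta>)"]
    by simp
  ultimately show ?thesis
    unfolding G_numerator_factor_def mult_2 by (intro hyperbolic_poly_mult)
qed

lemma hyperbolic_poly_G_numerator: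
  assumes a: "a \<in> {1..m}"
  shows "hyperbolic_poly (2 * (m - 1)) (\<lambda>z. G_numerator \<zeta> s m (lam(a := z)) xi)"
  unfolding G_numerator_def
proof (intro hyperbolic_poly_sum hyperbolic_poly_cmult)
  show "finite {\<sigma>. \<sigma> permutes {1..m}}"
    by (simp add: finite_permutations)
  fix \<sigma> assume "\<sigma> \<in> {\<sigma>. \<sigma> permutes {1..m}}"
  then have \<sigma>: "\<sigma> permutes {1..m}" by simp
  define q where "q = inv \<sigma> a"
  have q: "q \<in> {1..m}"
    unfolding q_def using a permutes_in_image[OF permutes_inv[OF \<sigma>]] by simp
  have \<sigma>_eq: "\<sigma> x = a \<longleftrightarrow> x = q" for x
    unfolding q_def using permutes_inverses[OF \<sigma>] by metis
  have \<sigma>_ne: "\<sigma> j \<noteq> \<sigma> k" if "j \<noteq> k" for j k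
    using that permutes_inj[OF \<sigma>] by (auto dest: injD)
  let ?F = "\<lambda>z j k. G_numerator_factor \<zeta> s (lam(a := z)) xi (\<sigma> j) (\<sigma> k) j k"
  have F_deg: "hyperbolic_poly (2 * (of_bool (j = q) + of_bool (k = q))) (\<lambda>z. ?F z j k)"
    if "j \<noteq> k" for j k
    using hyperbolic_poly_G_numerator_factor[OF \<sigma>_ne[OF that], of a \<zeta> s lam xi j k] by (simp add: \<sigma>_eq)
  \<comment> \<open>only the m - 1 pairs containing q involve z, each contributing degree 2\<close>
  let ?A = "\<lambda>z. \<Prod>j\<in>{1..m}-{q}. \<Prod>k\<in>{1..<j}-{q}. ?F z j k"
  let ?B = "\<lambda>z. \<Prod>b\<in>{1..m}-{q}. if b < q then ?F z q b else ?F z b q"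
  have "hyperbolic_poly 0 (\<lambda>z. ?F z j k)" if "j \<in> {1..m}-{q}" "k \<in> {1..<j}-{q}" for j k
    using F_deg[of j k] that by simp
  then have "hyperbolic_poly 0 ?A"
    by (intro hyperbolic_poly_prod[where n = "\<lambda>_. 0", simplified]) auto
  moreover have "hyperbolic_poly (card ({1..m}-{q}) * 2) ?B"
  proof (intro hyperbolic_poly_prod[where n = "\<lambda>_. 2", simplified])
    fix b assume "b \<in> {1..m}-{q}"
    then show "hyperbolic_poly 2 (\<lambda>z. if b < q then ?F z q b else ?F z b q)"
      using F_deg[of q b] F_deg[of b q] by (cases "b < q") simp_all
  qed simp
  ultimately have "hyperbolic_poly (0 + card ({1..m}-{q}) * 2) (\<lambda>z. ?A z * ?B z)"
    by (rule hyperbolic_poly_mult)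
  moreover have "0 + card ({1..m}-{q}) * 2 = 2 * (m - 1)"
    using q by simp
  ultimately show "hyperbolic_poly (2 * (m - 1)) (\<lambda>z. \<Prod>j\<in>{1..m}. \<Prod>k\<in>{1..<j}. ?F z j k)"
    unfolding prod_pairs_remove[OF q] by (simp add: mult.commute)
qed

lemma sinh_vandermonde_update:
  assumes a: "a \<in> {1..m}"
  obtains K where "\<And>z. sinh_vandermonde m (lam(a := z)) = K * (\<Prod>b\<in>{1..m}-{a}. sinh (z - lam b))"
proof -
  define K where "K = (\<Prod>j\<in>{1..m}-{a}. \<Prod>k\<in>{1..<j}-{a}. sinh (lam j - lam k)) *
    (\<Prod>b\<in>{1..m}-{a}. if b < a then 1 else - 1)"
  have "sinh_vandermonde m (lam(a := z)) = K * (\<Prod>b\<in>{1..m}-{a}. sinh (z - lam b))" for z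
  proof -
    have "sinh_vandermonde m (lam(a := z)) = (\<Prod>j\<in>{1..m}-{a}. \<Prod>k\<in>{1..<j}-{a}. sinh (lam j - lam k)) *
        (\<Prod>b\<in>{1..m}-{a}. if b < a then sinh (z - lam b) else sinh (lam b - z))"
      unfolding sinh_vandermonde_def prod_pairs_remove[OF a]
      by (intro arg_cong2[where f = "(*)"] prod.cong) auto
    also have "(\<Prod>b\<in>{1..m}-{a}. if b < a then sinh (z - lam b) else sinh (lam b - z)) =
        (\<Prod>b\<in>{1..m}-{a}. if b < a then 1 else - 1) * (\<Prod>b\<in>{1..m}-{a}. sinh (z - lam b))"
      unfolding prod.distrib[symmetric] using sinh_minus[of "z - lam b" for b]
      by (intro prod.cong) auto
    finally show ?thesis
      by (simp only: K_def mult.assoc)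
  qed
  then show ?thesis ..
qed

lemma G_numerator_update_eq_0:
  assumes a: "a \<in> {1..m}" and b: "b \<in> {1..m}" and "b \<noteq> a"
  shows "G_numerator \<zeta> s m (lam(a := lam b)) xi = 0"
proof -
  define L where "L = lam(a := lam b)"
  define T where "T \<sigma> = (\<Prod>j\<in>{1..m}. \<Prod>k\<in>{1..<j}. G_numerator_factor \<zeta> s L xi (\<sigma> j) (\<sigma> k) j k)" for \<sigma>
  have G_T: "G_numerator \<zeta> s m L xi = (\<Sum>\<sigma> | \<sigma> permutes {1..m}. of_int (sign \<sigma>) * T \<sigma>)"
    unfolding G_numerator_def T_def ..
  show ?thesis
  proof (cases "eps s a = eps s b")
    case True
    \<comment> \<open>the transposition of a and b fixes L and eps, so it pairs off terms of opposite sign\<close>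
    define \<tau> where "\<tau> = Transposition.transpose a b"
    have \<tau>: "\<tau> permutes {1..m}"
      unfolding \<tau>_def using a b by (rule permutes_swap_id)
    have L_\<tau>: "L (\<tau> c) = L c" for c
      unfolding \<tau>_def L_def by (simp add: Transposition.transpose_def)
    have eps_\<tau>: "eps s (\<tau> c) = eps s c" for c
      unfolding \<tau>_def using True by (simp add: Transposition.transpose_def)
    have T_\<tau>: "T (\<tau> \<circ> \<sigma>) = T \<sigma>" for \<sigma>
      unfolding T_def G_numerator_factor_def by (simp add: L_\<tau> eps_\<tau>)
    have sign_\<tau>: "sign (\<tau> \<circ> \<sigma>) = - sign \<sigma>" if "\<sigma> permutes {1..m}" for \<sigma>
      using sign_compose[of \<tau> \<sigma>] permutation_permutes \<tau> that sign_swap_id[of a b] \<open>b \<noteq> a\<close>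
      unfolding \<tau>_def by auto
    have "G_numerator \<zeta> s m L xi = (\<Sum>\<sigma> | \<sigma> permutes {1..m}. of_int (sign (\<tau> \<circ> \<sigma>)) * T (\<tau> \<circ> \<sigma>))"
      unfolding G_T by (rule setum_permutations_compose_left[OF \<tau>])
    also have "\<dots> = - G_numerator \<zeta> s m L xi"
      unfolding G_T sum_negf[symmetric] by (intro sum.cong) (auto simp: sign_\<tau> T_\<tau>)
    finally show ?thesis
      unfolding L_def by simp
  next
    case False
    \<comment> \<open>every term contains the factor sinh (lam b - lam b - 0) = 0\<close>
    then have eps_sum: "eps s a + eps s b = 0"
      unfolding eps_def by (auto split: if_splits)
    have "T \<sigma> = 0" if \<sigma>: "\<sigma> permutes {1..m}" for \<sigma>
    proof -
      define p where "p = inv \<sigma> a"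
      define q where "q = inv \<sigma> b"
      have \<sigma>_pq: "\<sigma> p = a" "\<sigma> q = b"
        unfolding p_def q_def using permutes_inverses(1)[OF \<sigma>] by auto
      have "p \<in> {1..m}" "q \<in> {1..m}"
        unfolding p_def q_def using a b permutes_in_image[OF permutes_inv[OF \<sigma>]] by auto
      moreover have "p \<noteq> q"
        using \<sigma>_pq \<open>b \<noteq> a\<close> by auto
      ultimately have jk: "max p q \<in> {1..m}" "min p q \<in> {1..<max p q}"
        by auto
      have "L (\<sigma> (max p q)) = lam b" "L (\<sigma> (min p q)) = lam b"
        "eps s (\<sigma> (max p q)) + eps s (\<sigma> (min p q)) = 0"
        unfolding L_def using \<sigma>_pq eps_sum by (auto simp: max_def min_def add.commute)
      then have "G_numerator_factor \<zeta> s L xi (\<sigma> (max p q)) (\<sigma> (min p q)) (max p q) (min p q) = 0"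
        unfolding G_numerator_factor_def by simp
      then have "(\<Prod>k\<in>{1..<max p q}. G_numerator_factor \<zeta> s L xi (\<sigma> (max p q)) (\<sigma> k) (max p q) k) = 0"
        using jk(2) by (intro prod_zero) auto
      then show ?thesis
        unfolding T_def using jk(1) by (intro prod_zero) auto
    qed
    then show ?thesis
      unfolding L_def[symmetric] G_T by simp
  qed
qed

lemma G_numerator_update_factor:
  assumes a: "a \<in> {1..m}" and z0: "regular_point \<zeta> s m (lam(a := z0))"
  obtains g where "hyperbolic_poly (m - 1) g"
    "\<And>z. G_numerator \<zeta> s m (lam(a := z)) xi = (\<Prod>b\<in>{1..m}-{a}. sinh (z - lam b)) * g z"
proof -
  have "sinh (lam b - lam d) \<noteq> 0" if "b \<in> {1..m}-{a}" "d \<in> {1..m}-{a}" "b \<noteq> d" for b d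
    using regular_point_sinh_nonzero(1)[OF z0, of b d] that by simp
  then have distinct: "pairwise (\<lambda>b d. sinh (lam b - lam d) \<noteq> 0) ({1..m}-{a})"
    unfolding pairwise_def by blast
  have degree: "hyperbolic_poly (m - 1 + card ({1..m}-{a})) (\<lambda>z. G_numerator \<zeta> s m (lam(a := z)) xi)"
    using hyperbolic_poly_G_numerator[OF a] a by (simp add: mult_2)
  have roots: "G_numerator \<zeta> s m (lam(a := lam b)) xi = 0" if "b \<in> {1..m}-{a}" for b
    using G_numerator_update_eq_0[OF a] that by simp
  show ?thesis
    using hyperbolic_poly_factor_roots[OF _ degree roots distinct] that by blast
qed

theorem lemma3p2:
  fixes \<zeta> :: real and m s j :: nat and lam xi :: "nat \<Rightarrow> complex"
  assumes "0 < \<zeta>" and "\<zeta> < pi" and "1 \<le> m" and "s \<le> m" and "j \<in> {1..m}"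
  shows "\<exists>c :: nat \<Rightarrow> complex. \<forall>z :: complex.
           regular_point \<zeta> s m (lam(j := z)) \<longrightarrow>
           exp (of_nat (m - 1) * z) * Gt \<zeta> s m (lam(j := z)) xi
             = (\<Sum>k<m. c k * exp (2 * z) ^ k)"
proof (cases "\<exists>z0. regular_point \<zeta> s m (lam(j := z0))")
  case False
  then show ?thesis by auto
next
  case True
  then obtain z0 where z0: "regular_point \<zeta> s m (lam(j := z0))" ..
  define B where "B = {1..m} - {j}"
  obtain K where K: "\<And>z. sinh_vandermonde m (lam(j := z)) = K * (\<Prod>b\<in>B. sinh (z - lam b))"
    using sinh_vandermonde_update[OF assms(5)] unfolding B_def by blast
  obtain g where g: "hyperbolic_poly (m - 1) g"
    "\<And>z. G_numerator \<zeta> s m (lam(j := z)) xi = (\<Prod>b\<in>B. sinh (z - lam b)) * g z"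
    using G_numerator_update_factor[OF assms(5) z0] unfolding B_def by blast
  have "Gt \<zeta> s m (lam(j := z)) xi = g z / K" if reg: "regular_point \<zeta> s m (lam(j := z))" for z
  proof -
    have "sinh_vandermonde m (lam(j := z)) \<noteq> 0"
      unfolding sinh_vandermonde_def using regular_point_sinh_nonzero(1)[OF reg] by auto
    then have "K \<noteq> 0" "(\<Prod>b\<in>B. sinh (z - lam b)) \<noteq> 0"
      unfolding K by auto
    moreover have "Gt \<zeta> s m (lam(j := z)) xi * K * (\<Prod>b\<in>B. sinh (z - lam b)) = g z * (\<Prod>b\<in>B. sinh (z - lam b))"
      using Gt_times_sinh_vandermonde[OF reg, of xi] unfolding K g(2) by (simp add: ac_simps)
    ultimately show ?thesis
      by (simp add: eq_divide_eq)
  qed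
  moreover obtain c where "\<And>z. exp (of_nat (m - 1) * z) * (g z / K) = (\<Sum>k<Suc (m - 1). c k * exp (2 * z) ^ k)"
    using hyperbolic_poly_coeffs[OF hyperbolic_poly_cmult[OF g(1), of "1 / K"]] by auto
  ultimately show ?thesis
    using assms(3) by (intro exI[of _ c]) auto
qed

end
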